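(* Let $\tau\in[0,1]$ and let $\tilde f,f$ be Gaussian densities on $\mathbb{R}^q$ with means $\tilde m_z,m_z$ and positive definite covariances $\tilde K_z,K_z$. Then $\mathcal{D}_\tau(\tilde f\|f)\ge0$, with equality if and only if $\tilde f=f$.
   Context: $\Delta m_z=\tilde m_z-m_z$, $L_z$ any matrix with $K_z=L_zL_z^T$, $M=L_z^{-1}\tilde K_zL_z^{-T}$, $\|v\|_A^2=v^TAv$, matrix log and powers of positive definite matrices are the usual ones. $\mathcal{D}_0(\tilde f\|f)=\|\Delta m_z\|^2_{K_z^{-1}}+\mathrm{tr}(-\log(\tilde K_zK_z^{-1})+\tilde K_zK_z^{-1}-I_q)$; for $0<\tau<1$, $\mathcal{D}_\tau(\tilde f\|f)=\frac1{1-\tau}\|\Delta m_z\|^2_{K_z^{-1}}+\mathrm{tr}(\frac1{\tau(\tau-1)}M^\tau+\frac1{1-\tau}\tilde K_zK_z^{-1}+\frac1\tau I_q)$; $\mathcal{D}_1(\tilde f\|f)=\delta(\Delta m_z)+\mathrm{tr}(M\log M-\tilde K_zK_z^{-1}+I_q)$, with $\delta(\Delta m_z)=0$ if $\Delta m_z=0$ and $+\infty$ otherwise. *)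

theory Defs
  imports "HOL-Analysis.Analysis" "HOL-Library.Extended_Real"
begin

definition pos_def_mat :: "real^'q::finite^'q \<Rightarrow> bool" where
  "pos_def_mat K \<longleftrightarrow> transpose K = K \<and> (\<forall>x. x \<noteq> 0 \<longrightarrow> x \<bullet> (K *v x) > 0)"

definition diag_mat :: "('q::finite \<Rightarrow> real) \<Rightarrow> real^'q^'q" where
  "diag_mat d = (\<chi> i j. if i = j then d i else 0)"

text \<open>Primary matrix function g(A) of a diagonalisable matrix A = P diag(d) P^{-1}:
  g(A) = P diag(g o d) P^{-1}. (Independent of the diagonalisation.) This gives the usual
  matrix logarithm and real powers of positive definite matrices, and of matrices
  similar to them such as tilde K K^{-1}.\<close>
definition mat_fun :: "(real \<Rightarrow> real) \<Rightarrow> real^'q::finite^'q \<Rightarrow> real^'q^'q" where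
  "mat_fun g A = (SOME B. \<exists>(P::real^'q^'q) d. invertible P \<and> A = P ** diag_mat d ** matrix_inv P
                          \<and> B = P ** diag_mat (\<lambda>i. g (d i)) ** matrix_inv P)"

definition mat_log :: "real^'q^'q \<Rightarrow> real^'q^'q" where
  "mat_log A = mat_fun ln A"

definition mat_powr :: "real^'q^'q \<Rightarrow> real \<Rightarrow> real^'q^'q" where
  "mat_powr A t = mat_fun (\<lambda>x. x powr t) A"

definition factor_L :: "real^'q^'q \<Rightarrow> real^'q^'q" where
  "factor_L K = (SOME L. K = L ** transpose L)"

definition M_mat :: "real^'q^'q \<Rightarrow> real^'q^'q \<Rightarrow> real^'q^'q" where
  "M_mat Kt K = matrix_inv (factor_L K) ** Kt ** transpose (matrix_inv (factor_L K))"

definition wnorm2 :: "real^'q^'q \<Rightarrow> real^'q \<Rightarrow> real" where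
  "wnorm2 A v = v \<bullet> (A *v v)"

definition gauss_density :: "real^'q \<Rightarrow> real^'q^'q \<Rightarrow> real^'q \<Rightarrow> real" where
  "gauss_density m K x = (2 * pi) powr (- real CARD('q) / 2) * det K powr (-1/2)
      * exp (- wnorm2 (matrix_inv K) (x - m) / 2)"

text \<open>The divergence D_tau(tilde f || f), with tilde f = N(mt, Kt), f = N(m, K); values in ereal
  since D_1 may be +infinity.\<close>
definition D_tau :: "real \<Rightarrow> real^'q \<Rightarrow> real^'q^'q \<Rightarrow> real^'q \<Rightarrow> real^'q^'q \<Rightarrow> ereal" where
  "D_tau \<tau> mt Kt m K =
    (let dm = mt - m; KK = Kt ** matrix_inv K; M = M_mat Kt K; I = mat 1 :: real^'q^'q in
     if \<tau> = 0 then
       ereal (wnorm2 (matrix_inv K) dm + trace (- mat_log KK + KK - I))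
     else if \<tau> = 1 then
       (if dm = 0 then ereal (trace (M ** mat_log M - KK + I)) else \<infinity>)
     else
       ereal (1 / (1 - \<tau>) * wnorm2 (matrix_inv K) dm
              + trace ((1 / (\<tau> * (\<tau> - 1))) *\<^sub>R mat_powr M \<tau> + (1 / (1 - \<tau>)) *\<^sub>R KK
                       + (1 / \<tau>) *\<^sub>R I)))"

end

theory Submission
  imports Defs
begin

text \<open>
  The mean term of \<open>D_tau\<close> is a nonnegative multiple of the quadratic form of the positive
  definite matrix \<open>K\<^sup>-\<^sup>1\<close> (for \<open>\<tau> = 1\<close> it is the indicator of \<open>mt \<noteq> m\<close>), so it is
  nonnegative and vanishes iff the means agree. For the covariance term, \<open>M = L\<^sup>-\<^sup>1 Kt L\<^sup>-\<^sup>T\<close> is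
  positive definite and similar to \<open>Kt K\<^sup>-\<^sup>1 = L M L\<^sup>-\<^sup>1\<close>. Diagonalising, each trace becomes
  a sum of \<open>\<phi>\<^sub>\<tau>(\<lambda>)\<close> (\<open>tau_generator\<close> below) over the positive eigenvalues \<open>\<lambda>\<close>,
  with \<open>\<phi>\<^sub>0(x) = x - 1 - ln x\<close>, \<open>\<phi>\<^sub>1(x) = x ln x - x + 1\<close> and
  \<open>\<phi>\<^sub>\<tau>(x) = (x\<^sup>\<tau> - \<tau> x - (1 - \<tau>)) / (\<tau> (\<tau> - 1))\<close>.
  By \<open>ln x \<le> x - 1\<close> and the strict weighted AM-GM inequality each \<open>\<phi>\<^sub>\<tau>\<close> is positive
  except at \<open>x = 1\<close>, so the covariance term vanishes iff all eigenvalues are 1, i.e. \<open>Kt = K\<close>.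
  Finally two Gaussian densities coincide iff their parameters do: the mean is the unique
  maximiser of the density, and the exponents then force \<open>Kt\<^sup>-\<^sup>1 = K\<^sup>-\<^sup>1\<close>.
\<close>

section \<open>Matrix inverses, diagonal matrices and traces\<close>

lemma matrix_inv_right: "invertible (A::real^'n^'n) \<Longrightarrow> A ** matrix_inv A = mat 1"
  and matrix_inv_left: "invertible (A::real^'n^'n) \<Longrightarrow> matrix_inv A ** A = mat 1"
  unfolding invertible_def matrix_inv_def by (metis (mono_tags, lifting) someI_ex)+

lemma matrix_inv_eq_right_inverse:
  fixes A B :: "real^'n^'n" assumes "A ** B = mat 1"
  shows "matrix_inv A = B"
proof -
  have "invertible A" using assms invertible_right_inverse by blast
  have "matrix_inv A = matrix_inv A ** (A ** B)" by (simp add: assms)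
  also have "\<dots> = B" by (simp add: matrix_mul_assoc matrix_inv_left[OF \<open>invertible A\<close>])
  finally show ?thesis .
qed

lemma invertible_matrix_inv: "invertible (A::real^'n^'n) \<Longrightarrow> invertible (matrix_inv A)"
  using matrix_inv_left invertible_right_inverse by blast

lemma matrix_inv_matrix_inv: "invertible (A::real^'n^'n) \<Longrightarrow> matrix_inv (matrix_inv A) = A"
  by (rule matrix_inv_eq_right_inverse) (rule matrix_inv_left)

lemma matrix_inv_mat_1: "matrix_inv (mat 1 :: real^'n^'n) = mat 1"
  by (rule matrix_inv_eq_right_inverse) simp

lemma mult_matrix_inv_eq_mat_1_iff:
  fixes A B :: "real^'n^'n" assumes "invertible B"
  shows "A ** matrix_inv B = mat 1 \<longleftrightarrow> A = B"
proof
  assume "A ** matrix_inv B = mat 1"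
  hence "A ** matrix_inv B ** B = B" by simp
  thus "A = B" by (simp add: matrix_mul_assoc[symmetric] matrix_inv_left[OF assms])
qed (simp add: matrix_inv_right[OF assms])

lemma similar_eq_mat_1_iff:
  fixes S X :: "real^'n^'n" assumes S: "invertible S"
  shows "S ** X ** matrix_inv S = mat 1 \<longleftrightarrow> X = mat 1"
proof
  assume "S ** X ** matrix_inv S = mat 1"
  hence "matrix_inv S ** (S ** X ** matrix_inv S) ** S = mat 1"
    by (simp add: matrix_inv_left[OF S])
  thus "X = mat 1"
    by (simp add: matrix_mul_assoc matrix_inv_left[OF S])
       (simp add: matrix_mul_assoc[symmetric] matrix_inv_left[OF S])
qed (simp add: matrix_inv_right[OF S])

lemma diag_mat_mult: "diag_mat a ** diag_mat b = diag_mat (\<lambda>i. a i * b i)"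
  by (simp add: vec_eq_iff diag_mat_def matrix_matrix_mult_def if_distrib[where f="\<lambda>x. x * _"]
      sum.delta cong: if_cong)

lemma transpose_diag_mat: "transpose (diag_mat d) = diag_mat d"
  by (simp add: vec_eq_iff diag_mat_def transpose_def)

lemma trace_diag_mat: "trace (diag_mat d) = sum d UNIV"
  by (simp add: trace_def diag_mat_def)

lemma trace_uminus: "trace (- (A::real^'n^'n)) = - trace A"
  by (simp add: trace_def sum_negf)

lemma trace_scaleR: "trace (c *\<^sub>R (A::real^'n^'n)) = c * trace A"
  by (simp add: trace_def sum_distrib_left)

lemma trace_similar:
  fixes S D :: "real^'n^'n" assumes "invertible S"
  shows "trace (S ** D ** matrix_inv S) = trace D"
  by (metis trace_mul_sym matrix_mul_assoc matrix_inv_left[OF assms] matrix_mul_lid)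

lemma diagonalisation_eigenvector:
  fixes A P :: "real^'n^'n"
  assumes P: "invertible P" and A: "A = P ** diag_mat d ** matrix_inv P"
  shows "column i P \<noteq> 0" "A *v column i P = d i *\<^sub>R column i P"
proof -
  have col: "column i P = P *v axis i 1" by (simp add: matrix_vector_mult_basis)
  show "column i P \<noteq> 0"
  proof
    assume "column i P = 0"
    hence "matrix_inv P *v (P *v axis i 1) = 0" by (simp add: col)
    hence "axis i (1::real) = 0" by (simp add: matrix_vector_mul_assoc matrix_inv_left[OF P])
    thus False by (simp add: axis_eq_0_iff)
  qed
  have "A ** P = P ** diag_mat d"
    by (simp add: A matrix_mul_assoc[symmetric] matrix_inv_left[OF P])
  hence "A *v column i P = (P ** diag_mat d) *v axis i 1"
    by (simp add: col matrix_vector_mul_assoc)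
  also have "\<dots> = d i *\<^sub>R column i P"
    by (simp add: matrix_vector_mult_basis vec_eq_iff column_def matrix_matrix_mult_def diag_mat_def
        if_distrib[where f="\<lambda>x. _ * x"] sum.delta' cong: if_cong)
  finally show "A *v column i P = d i *\<^sub>R column i P" .
qed

lemma diagonalisation_eq_mat_1_iff:
  fixes A P :: "real^'n^'n"
  assumes P: "invertible P" and A: "A = P ** diag_mat d ** matrix_inv P"
  shows "A = mat 1 \<longleftrightarrow> (\<forall>i. d i = 1)"
proof -
  have "diag_mat d = matrix_inv P ** A ** P"
    by (simp add: A matrix_mul_assoc matrix_inv_left[OF P])
       (simp add: matrix_mul_assoc[symmetric] matrix_inv_left[OF P])
  hence "A = mat 1 \<longleftrightarrow> diag_mat d = mat 1"
    by (auto simp: A matrix_inv_left[OF P] matrix_inv_right[OF P])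
  also have "\<dots> \<longleftrightarrow> (\<forall>i. d i = 1)"
    by (auto simp: vec_eq_iff diag_mat_def mat_def)
  finally show ?thesis .
qed

lemma mat_fun_diagonalisation:
  fixes A P :: "real^'n^'n"
  assumes "invertible P" "A = P ** diag_mat d ** matrix_inv P"
  obtains Q :: "real^'n^'n" and e where "invertible Q" "A = Q ** diag_mat e ** matrix_inv Q"
    "mat_fun g A = Q ** diag_mat (\<lambda>i. g (e i)) ** matrix_inv Q"
proof -
  let ?diag = "\<lambda>B. \<exists>(Q::real^'n^'n) e. invertible Q \<and> A = Q ** diag_mat e ** matrix_inv Q
                          \<and> B = Q ** diag_mat (\<lambda>i. g (e i)) ** matrix_inv Q"
  have "?diag (P ** diag_mat (\<lambda>i. g (d i)) ** matrix_inv P)" using assms by blast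
  hence "?diag (mat_fun g A)" unfolding mat_fun_def by (rule someI)
  then obtain Q :: "real^'n^'n" and e where "invertible Q" "A = Q ** diag_mat e ** matrix_inv Q"
    "mat_fun g A = Q ** diag_mat (\<lambda>i. g (e i)) ** matrix_inv Q" by blast
  then show thesis by (rule that)
qed

section \<open>Spectral theorem for real symmetric matrices\<close>

lemma symmetric_inner_matrix_vector:
  fixes A :: "real^'n^'n" assumes "transpose A = A"
  shows "x \<bullet> (A *v y) = (A *v x) \<bullet> y"
  by (metis assms dot_lmul_matrix vector_transpose_matrix)

lemma quadratic_nonneg_imp_linear_coeff_zero:
  fixes a b :: real assumes "\<And>t. 0 \<le> 2*t*a + t^2*b" shows "a = 0"
proof -
  have b: "b \<ge> 0" using assms[of 1] assms[of "-1"] by auto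
  define t where "t = -a/(b+1)"
  have bp: "b + 1 > 0" using b by simp
  have e1: "(b+1)^2 * (2*t*a) = - 2*a^2*(b+1)" and e2: "(b+1)^2 * (t^2*b) = a^2*b"
    using bp by (simp_all add: t_def power2_eq_square)
  have "(b+1)^2 * (2*t*a + t^2*b) = - (a^2*(b+2))"
    unfolding distrib_left e1 e2 by (simp add: algebra_simps)
  moreover have "0 \<le> (b+1)^2 * (2*t*a + t^2*b)" using assms[of t] by simp
  ultimately have "a^2 * (b+2) \<le> 0" by linarith
  with b show ?thesis by (simp add: mult_le_0_iff)
qed

lemma symmetric_matrix_rayleigh_max_eigenvector:
  fixes A :: "real^'n^'n"
  assumes sym: "transpose A = A" and S: "subspace S" and inv: "\<forall>x\<in>S. A *v x \<in> S"
    and x0: "x0 \<in> S" "x0 \<bullet> x0 = 1"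
    and max: "\<forall>y\<in>S. y \<bullet> (A *v y) \<le> (x0 \<bullet> (A *v x0)) * (y \<bullet> y)"
  shows "A *v x0 = (x0 \<bullet> (A *v x0)) *\<^sub>R x0"
proof -
  define l where "l = x0 \<bullet> (A *v x0)"
  define w where "w v = l *\<^sub>R v - A *v v" for v
  have w_nonneg: "v \<bullet> w v \<ge> 0" if "v \<in> S" for v
    using max that by (simp add: w_def l_def inner_diff_right)
  have w_x0: "x0 \<bullet> w x0 = 0" using x0(2) by (simp add: w_def l_def inner_diff_right)
  have w_lin: "w (a + t *\<^sub>R b) = w a + t *\<^sub>R w b" for a b t
    by (simp add: w_def matrix_vector_right_distrib matrix_vector_mult_scaleR algebra_simps)
  have w_sym: "a \<bullet> w b = b \<bullet> w a" for a b
    using symmetric_inner_matrix_vector[OF sym, of a b]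
    by (simp add: w_def inner_diff_right inner_commute)
  \<comment> \<open>x0 minimises the nonnegative form v \<bullet> w v on S, so w x0 is orthogonal to S\<close>
  have w_x0_orth: "y \<bullet> w x0 = 0" if y: "y \<in> S" for y
  proof (rule quadratic_nonneg_imp_linear_coeff_zero[where b = "y \<bullet> w y"])
    fix t :: real
    have "0 \<le> (x0 + t *\<^sub>R y) \<bullet> w (x0 + t *\<^sub>R y)"
      using S x0 y by (intro w_nonneg) (simp add: subspace_add subspace_scale)
    also have "\<dots> = 2*t*(y \<bullet> w x0) + t^2*(y \<bullet> w y)"
      using w_x0 w_sym[of x0 y]
      by (simp add: w_lin inner_add_left inner_add_right power2_eq_square algebra_simps)
    finally show "0 \<le> 2*t*(y \<bullet> w x0) + t^2*(y \<bullet> w y)" .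
  qed
  have "w x0 \<in> S" using S x0 inv by (simp add: w_def subspace_diff subspace_scale)
  hence "w x0 = 0" using w_x0_orth by (metis inner_eq_zero_iff)
  thus ?thesis by (simp add: w_def l_def)
qed

lemma symmetric_matrix_unit_eigenvector_in_invariant_subspace:
  fixes A :: "real^'n^'n"
  assumes sym: "transpose A = A" and S: "subspace S" and inv: "\<forall>x\<in>S. A *v x \<in> S"
    and ne: "S \<noteq> {0}"
  obtains x0 c where "x0 \<in> S" "x0 \<bullet> x0 = 1" "A *v x0 = c *\<^sub>R x0"
proof -
  let ?T = "sphere 0 1 \<inter> S"
  obtain z where z: "z \<in> S" "z \<noteq> 0" using ne S subspace_0 by blast
  have "z /\<^sub>R norm z \<in> ?T" using z S by (simp add: subspace_scale)
  moreover have "compact ?T" by (intro compact_Int_closed compact_sphere closed_subspace S)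
  moreover have "continuous_on ?T (\<lambda>x. x \<bullet> (A *v x))"
    by (intro continuous_intros linear_continuous_on matrix_vector_mul_bounded_linear)
  ultimately obtain x0 where x0: "x0 \<in> ?T" and mx: "\<forall>y\<in>?T. y \<bullet> (A *v y) \<le> x0 \<bullet> (A *v x0)"
    using continuous_attains_sup[of ?T] by blast
  have x0x0: "x0 \<bullet> x0 = 1" using x0 by (simp add: dot_square_norm)
  have "y \<bullet> (A *v y) \<le> (x0 \<bullet> (A *v x0)) * (y \<bullet> y)" if y: "y \<in> S" for y
  proof (cases "y = 0")
    case False
    hence "y /\<^sub>R norm y \<in> ?T" using y S by (simp add: subspace_scale)
    hence "(y /\<^sub>R norm y) \<bullet> (A *v (y /\<^sub>R norm y)) \<le> x0 \<bullet> (A *v x0)" using mx by blast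
    moreover have "(y /\<^sub>R norm y) \<bullet> (A *v (y /\<^sub>R norm y)) = (y \<bullet> (A *v y)) / (norm y)^2"
      by (simp add: matrix_vector_mult_scaleR power2_eq_square field_simps)
    ultimately have "(y \<bullet> (A *v y)) / (norm y)^2 \<le> x0 \<bullet> (A *v x0)" by simp
    thus ?thesis using False by (simp add: divide_le_eq dot_square_norm mult.commute)
  qed simp
  hence "A *v x0 = (x0 \<bullet> (A *v x0)) *\<^sub>R x0"
    using x0 x0x0 by (intro symmetric_matrix_rayleigh_max_eigenvector[OF sym S inv]) auto
  with x0 x0x0 show thesis using that by blast
qed

lemma span_insert_unit_orthocomplement:
  assumes S: "subspace S" and x0: "x0 \<in> S" "x0 \<bullet> x0 = 1"
    and B: "span B = {v \<in> S. x0 \<bullet> v = 0}"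
  shows "span (insert x0 B) = S"
proof
  have "B \<subseteq> S" using B span_superset by blast
  thus "span (insert x0 B) \<subseteq> S" using S x0 by (simp add: span_minimal)
  show "S \<subseteq> span (insert x0 B)"
  proof
    fix v assume v: "v \<in> S"
    have "v - (x0 \<bullet> v) *\<^sub>R x0 \<in> span B"
      using v x0 S by (simp add: B subspace_diff subspace_scale inner_diff_right)
    hence "v - (x0 \<bullet> v) *\<^sub>R x0 \<in> span (insert x0 B)"
      using span_mono[of B "insert x0 B"] by auto
    moreover have "(x0 \<bullet> v) *\<^sub>R x0 \<in> span (insert x0 B)" by (simp add: span_base span_scale)
    ultimately have "(v - (x0 \<bullet> v) *\<^sub>R x0) + (x0 \<bullet> v) *\<^sub>R x0 \<in> span (insert x0 B)"
      by (rule span_add)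
    thus "v \<in> span (insert x0 B)" by simp
  qed
qed

lemma symmetric_matrix_orthonormal_eigenbasis:
  fixes A :: "real^'n^'n"
  assumes sym: "transpose A = A" and "subspace S" "\<forall>x\<in>S. A *v x \<in> S"
  obtains B where "pairwise orthogonal B" "\<forall>x\<in>B. x \<bullet> x = 1"
    "\<forall>x\<in>B. \<exists>c. A *v x = c *\<^sub>R x" "span B = S"
  using assms(2,3)
proof (induction "dim S" arbitrary: S thesis rule: less_induct)
  case (less S)
  show ?case
  proof (cases "S = {0}")
    case True
    show ?thesis by (rule less.prems(1)[of "{}"]) (simp_all add: True)
  next
    case False
    obtain x0 c where x0: "x0 \<in> S" "x0 \<bullet> x0 = 1" "A *v x0 = c *\<^sub>R x0"
      using symmetric_matrix_unit_eigenvector_in_invariant_subspace[OF sym less.prems(2,3) False] .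
    define S' where "S' = {v \<in> S. x0 \<bullet> v = 0}"
    have sub': "subspace S'"
      using less.prems(2) by (auto simp: S'_def subspace_def inner_add_right)
    have inv': "\<forall>x\<in>S'. A *v x \<in> S'"
      using less.prems(3) x0(3) symmetric_inner_matrix_vector[OF sym, of x0] by (auto simp: S'_def)
    have "S' \<subseteq> S" "x0 \<in> S - S'" using x0 by (auto simp: S'_def)
    hence "S' \<subset> S" by blast
    hence "span S' \<subset> span S" using sub' less.prems(2) by (metis span_eq_iff)
    hence "dim S' < dim S" by (rule dim_psubset)
    then obtain B where B: "pairwise orthogonal B" "\<forall>x\<in>B. x \<bullet> x = 1"
        "\<forall>x\<in>B. \<exists>c. A *v x = c *\<^sub>R x" "span B = S'"
      using less.hyps sub' inv' by blast
    have BS': "B \<subseteq> S'" using B(4) span_superset by blast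
    show ?thesis
    proof (rule less.prems(1))
      show "pairwise orthogonal (insert x0 B)"
        using B(1) BS' by (auto simp: pairwise_insert S'_def orthogonal_def inner_commute)
      show "span (insert x0 B) = S"
        using span_insert_unit_orthocomplement[OF less.prems(2) x0(1,2)] B(4) by (simp add: S'_def)
    qed (use B(2,3) x0 in auto)
  qed
qed

lemma matrix_of_eigenvectors:
  fixes A :: "real^'n^'n"
  assumes "\<And>j. A *v g j = d j *\<^sub>R g j"
  shows "A ** (\<chi> i j. g j $ i) = (\<chi> i j. g j $ i) ** diag_mat d"
proof -
  have "(A ** (\<chi> i j. g j $ i)) $ i $ j = (A *v g j) $ i" for i j
    by (simp add: matrix_matrix_mult_def matrix_vector_mult_def)
  also have "(A *v g j) $ i = ((\<chi> i j. g j $ i) ** diag_mat d) $ i $ j" for i j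
    by (simp add: assms matrix_matrix_mult_def diag_mat_def if_distrib[where f="\<lambda>x. _ * x"]
        sum.delta' cong: if_cong)
  finally show ?thesis by (simp add: vec_eq_iff)
qed

lemma symmetric_matrix_diagonalisation:
  fixes A :: "real^'n^'n"
  assumes sym: "transpose A = A"
  obtains P d where "orthogonal_matrix P" "A = P ** diag_mat d ** transpose P"
proof -
  obtain B where B: "pairwise orthogonal B" "\<forall>x\<in>B. x \<bullet> x = 1"
       "\<forall>x\<in>B. \<exists>c. A *v x = c *\<^sub>R x" "span B = UNIV"
    using symmetric_matrix_orthonormal_eigenbasis[OF sym subspace_UNIV] by auto
  have "independent B" using B(1,2) pairwise_orthogonal_independent by fastforce
  hence "finite B" "card B = CARD('n)"
    using independent_bound basis_card_eq_dim[of B UNIV] B(4) by auto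
  then obtain g where g: "bij_betw g (UNIV::'n set) B"
    using finite_same_card_bij[of "UNIV::'n set" B] by auto
  define P :: "real^'n^'n" where "P = (\<chi> i j. g j $ i)"
  define d where "d j = (SOME c. A *v g j = c *\<^sub>R g j)" for j
  have gB: "g j \<in> B" for j using g by (auto simp: bij_betw_def)
  have dj: "A *v g j = d j *\<^sub>R g j" for j
    unfolding d_def using B(3) gB[of j] by (metis (mono_tags, lifting) someI_ex)
  have gg: "g i \<bullet> g j = (if i = j then 1 else 0)" for i j
  proof (cases "i = j")
    case True thus ?thesis using B(2) gB[of j] by simp
  next
    case False
    hence "g i \<noteq> g j" using g by (auto simp: bij_betw_def inj_on_def)
    thus ?thesis using False B(1) gB[of i] gB[of j] by (auto simp: pairwise_def orthogonal_def)
  qed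
  have "transpose P ** P = mat 1"
    by (simp add: vec_eq_iff P_def matrix_matrix_mult_def transpose_def mat_def gg[symmetric] inner_vec_def)
  hence orth: "orthogonal_matrix P" by (simp add: orthogonal_matrix)
  have "A ** P = P ** diag_mat d"
    unfolding P_def by (rule matrix_of_eigenvectors[OF dj])
  hence "A = P ** diag_mat d ** transpose P"
    using orth by (metis matrix_mul_assoc matrix_mul_rid orthogonal_matrix_def)
  with orth show thesis by (rule that)
qed

lemma symmetric_matrix_eqI_quadratic_form:
  fixes A B :: "real^'n^'n"
  assumes sA: "transpose A = A" and sB: "transpose B = B" and q: "\<And>v. v \<bullet> (A *v v) = v \<bullet> (B *v v)"
  shows "A = B"
proof -
  define C where "C = A - B"
  have sC: "transpose C = C" using sA sB by (simp add: C_def vec_eq_iff transpose_def)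
  have qC: "v \<bullet> (C *v v) = 0" for v
    using q[of v] by (simp add: C_def matrix_vector_mult_diff_rdistrib inner_diff_right)
  have bilinear: "u \<bullet> (C *v v) = 0" for u v
  proof -
    have "0 = (u + v) \<bullet> (C *v (u + v))" using qC by simp
    also have "\<dots> = u \<bullet> (C *v u) + u \<bullet> (C *v v) + v \<bullet> (C *v u) + v \<bullet> (C *v v)"
      by (simp add: matrix_vector_right_distrib inner_add_left inner_add_right)
    also have "v \<bullet> (C *v u) = u \<bullet> (C *v v)"
      using symmetric_inner_matrix_vector[OF sC, of v u] by (simp add: inner_commute)
    finally show ?thesis using qC[of u] qC[of v] by simp
  qed
  hence "C $ i $ j = 0" for i j
    using bilinear[of "axis i 1" "axis j 1"]
    by (simp add: matrix_vector_mult_basis inner_commute[of "axis i 1"] inner_axis column_def)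
  thus ?thesis by (simp add: C_def vec_eq_iff)
qed

section \<open>Positive definite matrices\<close>

lemma pos_def_mat_eigenvalue_pos:
  fixes B :: "real^'n^'n"
  assumes "pos_def_mat B" "v \<noteq> 0" "B *v v = c *\<^sub>R v"
  shows "c > 0"
proof -
  have "0 < v \<bullet> (B *v v)" using assms(1,2) by (simp add: pos_def_mat_def)
  also have "\<dots> = c * (v \<bullet> v)" using assms(3) by simp
  moreover have "v \<bullet> v > 0" using assms(2) by simp
  ultimately show ?thesis by (simp add: zero_less_mult_iff)
qed

lemma pos_def_mat_invertible: "pos_def_mat (K::real^'n^'n) \<Longrightarrow> invertible K"
  unfolding pos_def_mat_def
  by (metis inner_zero_right less_irrefl invertible_left_inverse matrix_left_invertible_ker)

lemma pos_def_mat_diagonalisation: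
  fixes K :: "real^'n^'n"
  assumes "pos_def_mat K"
  obtains P d where "orthogonal_matrix P" "K = P ** diag_mat d ** transpose P" "\<forall>i. d i > 0"
proof -
  obtain P d where P: "orthogonal_matrix P" "K = P ** diag_mat d ** transpose P"
    using symmetric_matrix_diagonalisation assms unfolding pos_def_mat_def by blast
  have Pinv: "invertible P" "matrix_inv P = transpose P"
    using P(1) invertible_right_inverse matrix_inv_eq_right_inverse
    unfolding orthogonal_matrix_def by blast+
  have "d i > 0" for i
    using diagonalisation_eigenvector[OF Pinv(1), of K d i] P(2) Pinv(2)
      pos_def_mat_eigenvalue_pos[OF assms] by simp
  with P show thesis using that by blast
qed

lemma pos_def_mat_congruence:
  fixes K B :: "real^'n^'n"
  assumes K: "pos_def_mat K" and B: "invertible B"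
  shows "pos_def_mat (B ** K ** transpose B)"
  unfolding pos_def_mat_def
proof (intro conjI allI impI)
  show "transpose (B ** K ** transpose B) = B ** K ** transpose B"
    using K by (simp add: pos_def_mat_def matrix_transpose_mul matrix_mul_assoc)
  fix x :: "real^'n" assume "x \<noteq> 0"
  moreover have "matrix_inv (transpose B) *v (transpose B *v x) = x"
    by (simp only: matrix_vector_mul_assoc matrix_inv_left[OF transpose_invertible[OF B]]
        matrix_vector_mul_lid)
  ultimately have "transpose B *v x \<noteq> 0" by (metis matrix_vector_mult_0_right)
  hence "0 < (transpose B *v x) \<bullet> (K *v (transpose B *v x))"
    using K by (simp add: pos_def_mat_def)
  also have "\<dots> = x \<bullet> (B *v (K *v (transpose B *v x)))"
    by (metis dot_lmul_matrix vector_transpose_matrix transpose_transpose)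
  also have "\<dots> = x \<bullet> ((B ** K ** transpose B) *v x)"
    by (simp only: matrix_vector_mul_assoc matrix_mul_assoc)
  finally show "0 < x \<bullet> ((B ** K ** transpose B) *v x)" .
qed

lemma symmetric_matrix_inv:
  fixes K :: "real^'n^'n" assumes "invertible K" "transpose K = K"
  shows "transpose (matrix_inv K) = matrix_inv K"
proof -
  have "K ** transpose (matrix_inv K) = mat 1"
    by (metis assms matrix_inv_left matrix_transpose_mul transpose_mat)
  thus ?thesis using matrix_inv_eq_right_inverse by metis
qed

lemma pos_def_mat_matrix_inv:
  fixes K :: "real^'n^'n" assumes K: "pos_def_mat K"
  shows "pos_def_mat (matrix_inv K)"
proof -
  have iK: "invertible K" by (rule pos_def_mat_invertible[OF K])
  have sym: "transpose (matrix_inv K) = matrix_inv K"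
    using K iK symmetric_matrix_inv unfolding pos_def_mat_def by blast
  have "matrix_inv K = matrix_inv K ** K ** transpose (matrix_inv K)"
    by (simp add: sym matrix_inv_left[OF iK])
  thus ?thesis
    using pos_def_mat_congruence[OF K invertible_matrix_inv[OF iK]] by simp
qed

lemma wnorm2_pos: "pos_def_mat A \<Longrightarrow> v \<noteq> 0 \<Longrightarrow> wnorm2 A v > 0"
  by (simp add: pos_def_mat_def wnorm2_def)

lemma factor_L_mult_transpose:
  fixes K :: "real^'n^'n" assumes "pos_def_mat K"
  shows "K = factor_L K ** transpose (factor_L K)"
proof -
  obtain P d where P: "orthogonal_matrix P" "K = P ** diag_mat d ** transpose P" "\<forall>i. d i > 0"
    using pos_def_mat_diagonalisation[OF assms] by blast
  define L where "L = P ** diag_mat (\<lambda>i. sqrt (d i))"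
  have "L ** transpose L
      = P ** (diag_mat (\<lambda>i. sqrt (d i)) ** diag_mat (\<lambda>i. sqrt (d i))) ** transpose P"
    by (simp add: L_def matrix_transpose_mul transpose_diag_mat matrix_mul_assoc)
  also have "\<dots> = K" using P(2,3) by (simp add: diag_mat_mult less_imp_le)
  finally have "\<exists>L::real^'n^'n. K = L ** transpose L" by metis
  thus ?thesis unfolding factor_L_def by (rule someI_ex)
qed

lemma invertible_factor_L:
  fixes K :: "real^'n^'n" assumes "pos_def_mat K"
  shows "invertible (factor_L K)"
proof -
  have "factor_L K ** (transpose (factor_L K) ** matrix_inv K) = mat 1"
    using matrix_inv_right[OF pos_def_mat_invertible[OF assms]] factor_L_mult_transpose[OF assms]
    by (simp add: matrix_mul_assoc)
  thus ?thesis using invertible_right_inverse by blast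
qed

lemma det_pos_def_mat_pos: "pos_def_mat (K::real^'n^'n) \<Longrightarrow> det K > 0"
  by (metis factor_L_mult_transpose invertible_factor_L det_mul det_transpose invertible_det_nz
      not_real_square_gt_zero)

lemma similar_pos_def_eigenvalue_pos:
  fixes B S :: "real^'n^'n"
  assumes B: "pos_def_mat B" and S: "invertible S"
    and v: "v \<noteq> 0" "(S ** B ** matrix_inv S) *v v = c *\<^sub>R v"
  shows "c > 0"
proof (rule pos_def_mat_eigenvalue_pos[OF B])
  show "matrix_inv S *v v \<noteq> 0"
    using v(1) by (metis matrix_vector_mult_0_right matrix_vector_mul_assoc matrix_inv_right[OF S]
        matrix_vector_mul_lid)
  have "B *v (matrix_inv S *v v) = matrix_inv S *v ((S ** B ** matrix_inv S) *v v)"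
    by (simp add: matrix_vector_mul_assoc matrix_mul_assoc matrix_inv_left[OF S])
  also have "\<dots> = c *\<^sub>R (matrix_inv S *v v)" by (simp add: v(2) matrix_vector_mult_scaleR)
  finally show "B *v (matrix_inv S *v v) = c *\<^sub>R (matrix_inv S *v v)" .
qed

lemma trace_mat_fun_similar_pos_def:
  fixes B S :: "real^'n^'n"
  assumes B: "pos_def_mat B" and S: "invertible S"
  defines "A \<equiv> S ** B ** matrix_inv S"
  obtains e :: "'n \<Rightarrow> real" where "\<forall>i. e i > 0" "A = mat 1 \<longleftrightarrow> (\<forall>i. e i = 1)" "trace A = sum e UNIV"
    "trace (mat_fun g A) = (\<Sum>i\<in>UNIV. g (e i))"
    "trace (A ** mat_fun g A) = (\<Sum>i\<in>UNIV. e i * g (e i))"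
proof -
  obtain P d where P: "orthogonal_matrix P" "B = P ** diag_mat d ** transpose P"
    using pos_def_mat_diagonalisation[OF B] by blast
  have SP: "(S ** P) ** (transpose P ** matrix_inv S) = mat 1"
    using P(1) by (simp add: matrix_mul_assoc orthogonal_matrix_def)
      (simp add: matrix_mul_assoc[symmetric] matrix_inv_right[OF S])
  have "invertible (S ** P)" using SP invertible_right_inverse by blast
  moreover have "A = (S ** P) ** diag_mat d ** matrix_inv (S ** P)"
    by (simp add: A_def P(2) matrix_inv_eq_right_inverse[OF SP] matrix_mul_assoc)
  ultimately obtain Q :: "real^'n^'n" and e where Q: "invertible Q"
      "A = Q ** diag_mat e ** matrix_inv Q" "mat_fun g A = Q ** diag_mat (\<lambda>i. g (e i)) ** matrix_inv Q"
    by (rule mat_fun_diagonalisation)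
  have "e i > 0" for i
    using diagonalisation_eigenvector[OF Q(1,2)] similar_pos_def_eigenvalue_pos[OF B S]
    unfolding A_def by metis
  moreover have "trace A = sum e UNIV"
    by (simp only: Q(2) trace_similar[OF Q(1)] trace_diag_mat)
  moreover have "trace (mat_fun g A) = (\<Sum>i\<in>UNIV. g (e i))"
    by (simp only: Q(3) trace_similar[OF Q(1)] trace_diag_mat)
  moreover have "A ** mat_fun g A
      = Q ** (diag_mat e ** (matrix_inv Q ** Q) ** diag_mat (\<lambda>i. g (e i))) ** matrix_inv Q"
    unfolding Q(3) by (subst Q(2)) (simp add: matrix_mul_assoc)
  hence "trace (A ** mat_fun g A) = (\<Sum>i\<in>UNIV. e i * g (e i))"
    by (simp add: matrix_inv_left[OF Q(1)] diag_mat_mult trace_similar[OF Q(1)] trace_diag_mat)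
  ultimately show thesis
    using diagonalisation_eq_mat_1_iff[OF Q(1,2)] that by blast
qed

lemma matrix_inv_eq_factor_L:
  fixes K :: "real^'n^'n" assumes K: "pos_def_mat K"
  shows "matrix_inv K = transpose (matrix_inv (factor_L K)) ** matrix_inv (factor_L K)"
proof (rule matrix_inv_eq_right_inverse)
  let ?L = "factor_L K"
  have L: "invertible ?L" by (rule invertible_factor_L[OF K])
  have "transpose ?L ** transpose (matrix_inv ?L) = mat 1"
    by (metis matrix_transpose_mul transpose_mat matrix_inv_left[OF L])
  hence "?L ** transpose ?L ** (transpose (matrix_inv ?L) ** matrix_inv ?L) = ?L ** matrix_inv ?L"
    by (metis matrix_mul_assoc matrix_mul_lid)
  thus "K ** (transpose (matrix_inv ?L) ** matrix_inv ?L) = mat 1"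
    by (simp add: factor_L_mult_transpose[OF K, symmetric] matrix_inv_right[OF L])
qed

lemma pos_def_mat_M_mat:
  fixes Kt K :: "real^'n^'n" assumes "pos_def_mat Kt" "pos_def_mat K"
  shows "pos_def_mat (M_mat Kt K)"
  unfolding M_mat_def
  by (rule pos_def_mat_congruence[OF assms(1) invertible_matrix_inv[OF invertible_factor_L[OF assms(2)]]])

lemma mult_matrix_inv_similar_M_mat:
  fixes Kt K :: "real^'n^'n" assumes K: "pos_def_mat K"
  shows "Kt ** matrix_inv K = factor_L K ** M_mat Kt K ** matrix_inv (factor_L K)"
  by (simp add: M_mat_def matrix_inv_eq_factor_L[OF K] matrix_mul_assoc
      matrix_inv_right[OF invertible_factor_L[OF K]])

lemma spectral_data_M_mat:
  fixes Kt K A :: "real^'n^'n"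
  assumes Kt: "pos_def_mat Kt" and K: "pos_def_mat K"
    and A: "A = Kt ** matrix_inv K \<or> A = M_mat Kt K"
  obtains e :: "'n \<Rightarrow> real" where "\<forall>i. e i > 0" "Kt = K \<longleftrightarrow> (\<forall>i. e i = 1)"
    "trace (Kt ** matrix_inv K) = sum e UNIV" "trace (mat_fun g A) = (\<Sum>i\<in>UNIV. g (e i))"
    "trace (A ** mat_fun g A) = (\<Sum>i\<in>UNIV. e i * g (e i))"
proof -
  let ?L = "factor_L K" and ?M = "M_mat Kt K"
  have L: "invertible ?L" by (rule invertible_factor_L[OF K])
  have KK: "Kt ** matrix_inv K = ?L ** ?M ** matrix_inv ?L" by (rule mult_matrix_inv_similar_M_mat[OF K])
  have "Kt = K \<longleftrightarrow> Kt ** matrix_inv K = mat 1"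
    by (rule mult_matrix_inv_eq_mat_1_iff[OF pos_def_mat_invertible[OF K], symmetric])
  also have "\<dots> \<longleftrightarrow> ?M = mat 1" by (simp only: KK similar_eq_mat_1_iff[OF L])
  finally have eq: "Kt = K \<longleftrightarrow> ?M = mat 1" .
  have tr: "trace (Kt ** matrix_inv K) = trace ?M" by (simp add: KK trace_similar[OF L])
  obtain S where S: "invertible S" "A = S ** ?M ** matrix_inv S"
    using A KK L invertible_right_inverse[of "mat 1 :: real^'n^'n"] by (auto simp: matrix_inv_mat_1)
  obtain e :: "'n \<Rightarrow> real" where e: "\<forall>i. e i > 0" "A = mat 1 \<longleftrightarrow> (\<forall>i. e i = 1)"
      "trace A = sum e UNIV" "trace (mat_fun g A) = (\<Sum>i\<in>UNIV. g (e i))"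
      "trace (A ** mat_fun g A) = (\<Sum>i\<in>UNIV. e i * g (e i))"
    using trace_mat_fun_similar_pos_def[OF pos_def_mat_M_mat[OF Kt K] S(1), of g]
    unfolding S(2)[symmetric] by blast
  have "A = mat 1 \<longleftrightarrow> ?M = mat 1" "trace A = trace ?M"
    using S by (simp_all add: similar_eq_mat_1_iff trace_similar)
  with e eq tr show thesis by (intro that) simp_all
qed

section \<open>Gaussian densities\<close>

lemma gauss_density_shift:
  "gauss_density m K (m + v) = gauss_density m K m * exp (- wnorm2 (matrix_inv K) v / 2)"
  by (simp add: gauss_density_def wnorm2_def)

lemma gauss_density_at_mean_pos: "pos_def_mat K \<Longrightarrow> gauss_density m K m > 0"
  using det_pos_def_mat_pos[of K] by (simp add: gauss_density_def wnorm2_def)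

lemma gauss_density_less_at_mean:
  assumes K: "pos_def_mat K" and "x \<noteq> m"
  shows "gauss_density m K x < gauss_density m K m"
proof -
  have "wnorm2 (matrix_inv K) (x - m) > 0"
    using assms by (simp add: wnorm2_pos pos_def_mat_matrix_inv)
  thus ?thesis
    using gauss_density_shift[of m K "x - m"] gauss_density_at_mean_pos[OF K, of m] by simp
qed

lemma gauss_density_eq_iff:
  fixes Kt K :: "real^'n^'n"
  assumes Kt: "pos_def_mat Kt" and K: "pos_def_mat K"
  shows "gauss_density mt Kt = gauss_density m K \<longleftrightarrow> mt = m \<and> Kt = K"
proof
  assume eq: "gauss_density mt Kt = gauss_density m K"
  show "mt = m \<and> Kt = K"
  proof
    show mt: "mt = m"
    proof (rule ccontr)
      assume "mt \<noteq> m"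
      hence "gauss_density m K mt < gauss_density m K m"
        and "gauss_density mt Kt m < gauss_density mt Kt mt"
        using gauss_density_less_at_mean[OF K] gauss_density_less_at_mean[OF Kt] by auto
      with eq show False by simp
    qed
    have "exp (- wnorm2 (matrix_inv Kt) v / 2) = exp (- wnorm2 (matrix_inv K) v / 2)" for v
      using gauss_density_shift[of m K v] gauss_density_shift[of m Kt v] eq mt
        gauss_density_at_mean_pos[OF K, of m] by simp
    hence "v \<bullet> (matrix_inv Kt *v v) = v \<bullet> (matrix_inv K *v v)" for v
      by (simp add: wnorm2_def)
    moreover have "transpose (matrix_inv Kt) = matrix_inv Kt" "transpose (matrix_inv K) = matrix_inv K"
      using pos_def_mat_matrix_inv[OF Kt] pos_def_mat_matrix_inv[OF K] by (simp_all add: pos_def_mat_def)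
    ultimately have "matrix_inv Kt = matrix_inv K"
      using symmetric_matrix_eqI_quadratic_form by blast
    thus "Kt = K"
      by (metis matrix_inv_matrix_inv pos_def_mat_invertible Kt K)
  qed
qed simp

section \<open>The scalar generators of the divergence\<close>

lemma one_plus_less_exp: "y \<noteq> 0 \<Longrightarrow> 1 + y < exp y" for y :: real
  using exp_minus_greater[of "-y"] by simp

lemma ln_less_minus_one: "0 < x \<Longrightarrow> x \<noteq> 1 \<Longrightarrow> ln x < x - 1"
  for x :: real
  using ln_le_minus_one ln_eq_minus_one by force

lemma powr_less_convex_combination:
  fixes x t :: real assumes x: "x > 0" "x \<noteq> 1" and t: "0 < t" "t < 1"
  shows "x powr t < t * x + (1 - t)"
proof -
  define y where "y = ln x"
  have y: "y \<noteq> 0" using x by (simp add: y_def)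
  have "1 = t * (1 + (1-t)*y) + (1-t) * (1 + (-t*y))" by (simp add: algebra_simps)
  also have "\<dots> < t * exp ((1-t)*y) + (1-t) * exp (-t*y)"
    using one_plus_less_exp[of "(1-t)*y"] y t
    by (intro add_less_le_mono mult_strict_left_mono mult_left_mono exp_ge_add_one_self) auto
  finally have "exp (t*y) * 1 < exp (t*y) * (t * exp ((1-t)*y) + (1-t) * exp (-t*y))"
    by (intro mult_strict_left_mono) auto
  also have "\<dots> = t * exp y + (1-t)"
    by (simp add: distrib_left mult.left_commute exp_add[symmetric] algebra_simps)
  finally show ?thesis using x by (simp add: powr_def y_def)
qed

definition tau_generator :: "real \<Rightarrow> real \<Rightarrow> real" where
  "tau_generator \<tau> x =
    (if \<tau> = 0 then x - 1 - ln x
     else if \<tau> = 1 then x * ln x - x + 1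
     else (x powr \<tau> - \<tau> * x - (1 - \<tau>)) / (\<tau> * (\<tau> - 1)))"

lemma tau_generator_one [simp]: "tau_generator \<tau> 1 = 0"
  by (simp add: tau_generator_def)

lemma tau_generator_pos:
  assumes "0 \<le> \<tau>" "\<tau> \<le> 1" "x > 0" "x \<noteq> 1"
  shows "tau_generator \<tau> x > 0"
proof -
  consider "\<tau> = 0" | "\<tau> = 1" | "0 < \<tau>" "\<tau> < 1" using assms(1,2) by linarith
  thus ?thesis
  proof cases
    case 1 thus ?thesis using ln_less_minus_one[OF assms(3,4)] by (simp add: tau_generator_def)
  next
    case 2
    have "ln (1/x) < 1/x - 1" using assms(3,4) by (intro ln_less_minus_one) auto
    hence "- ln x < 1/x - 1" using assms(3) by (simp add: ln_div)
    hence "x * (- ln x) < x * (1/x - 1)" using assms(3) by (rule mult_strict_left_mono)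
    thus ?thesis using 2 assms(3) by (simp add: tau_generator_def algebra_simps)
  next
    case 3
    hence "x powr \<tau> - \<tau> * x - (1 - \<tau>) < 0" "\<tau> * (\<tau> - 1) < 0"
      using powr_less_convex_combination[OF assms(3,4), of \<tau>] by (auto simp: mult_pos_neg)
    thus ?thesis using 3 by (simp add: tau_generator_def zero_less_divide_iff)
  qed
qed

lemma tau_generator_interior:
  assumes "0 < \<tau>" "\<tau> < 1"
  shows "tau_generator \<tau> x = 1 / (\<tau> * (\<tau> - 1)) * x powr \<tau> + 1 / (1 - \<tau>) * x + 1 / \<tau>"
  using assms by (simp add: tau_generator_def divide_simps) (simp add: algebra_simps)

lemma D_tau_eq_sum_tau_generator:
  fixes Kt K :: "real^'q^'q" and mt m :: "real^'q"
  assumes \<tau>: "0 \<le> \<tau>" "\<tau> \<le> 1" and Kt: "pos_def_mat Kt" and K: "pos_def_mat K"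
  obtains e :: "'q \<Rightarrow> real" where "\<forall>i. e i > 0" "Kt = K \<longleftrightarrow> (\<forall>i. e i = 1)"
    "D_tau \<tau> mt Kt m K =
      (if \<tau> = 1 then (if mt = m then ereal (\<Sum>i\<in>UNIV. tau_generator \<tau> (e i)) else \<infinity>)
       else ereal (wnorm2 (matrix_inv K) (mt - m) / (1 - \<tau>) + (\<Sum>i\<in>UNIV. tau_generator \<tau> (e i))))"
proof -
  let ?KK = "Kt ** matrix_inv K" and ?M = "M_mat Kt K"
  consider "\<tau> = 0" | "\<tau> = 1" | "0 < \<tau>" "\<tau> < 1" using \<tau> by linarith
  then show thesis
  proof cases
    case 1
    obtain e :: "'q \<Rightarrow> real" where e: "\<forall>i. e i > 0" "Kt = K \<longleftrightarrow> (\<forall>i. e i = 1)"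
        "trace ?KK = sum e UNIV" "trace (mat_fun ln ?KK) = (\<Sum>i\<in>UNIV. ln (e i))"
      by (rule spectral_data_M_mat[OF Kt K disjI1[OF refl], of ln]) simp
    have "trace (- mat_log ?KK + ?KK - mat 1) = (\<Sum>i\<in>UNIV. tau_generator \<tau> (e i))"
      using e(3,4) 1 by (simp add: mat_log_def trace_add trace_sub trace_uminus trace_I
          tau_generator_def sum.distrib sum_subtractf)
    with 1 show thesis using e(1,2) by (intro that) (simp_all add: D_tau_def Let_def)
  next
    case 2
    obtain e :: "'q \<Rightarrow> real" where e: "\<forall>i. e i > 0" "Kt = K \<longleftrightarrow> (\<forall>i. e i = 1)"
        "trace ?KK = sum e UNIV" "trace (?M ** mat_fun ln ?M) = (\<Sum>i\<in>UNIV. e i * ln (e i))"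
      by (rule spectral_data_M_mat[OF Kt K disjI2[OF refl], of ln]) simp
    have "trace (?M ** mat_log ?M - ?KK + mat 1) = (\<Sum>i\<in>UNIV. tau_generator \<tau> (e i))"
      using e(3,4) 2 by (simp add: mat_log_def trace_add trace_sub trace_I
          tau_generator_def sum.distrib sum_subtractf)
    with 2 show thesis using e(1,2) by (intro that) (auto simp: D_tau_def Let_def)
  next
    case 3
    obtain e :: "'q \<Rightarrow> real" where e: "\<forall>i. e i > 0" "Kt = K \<longleftrightarrow> (\<forall>i. e i = 1)"
        "trace ?KK = sum e UNIV" "trace (mat_fun (\<lambda>x. x powr \<tau>) ?M) = (\<Sum>i\<in>UNIV. e i powr \<tau>)"
      by (rule spectral_data_M_mat[OF Kt K disjI2[OF refl], of "\<lambda>x. x powr \<tau>"]) simp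
    have "trace ((1 / (\<tau> * (\<tau> - 1))) *\<^sub>R mat_powr ?M \<tau> + (1 / (1 - \<tau>)) *\<^sub>R ?KK
             + (1 / \<tau>) *\<^sub>R mat 1) = (\<Sum>i\<in>UNIV. tau_generator \<tau> (e i))"
      using e(3,4) by (simp add: tau_generator_interior[OF 3] mat_powr_def trace_add trace_scaleR
          trace_I sum.distrib sum_distrib_left)
    with 3 show thesis using e(1,2) by (intro that) (simp_all add: D_tau_def Let_def)
  qed
qed

theorem proposition1:
  fixes \<tau> :: real and mt m :: "real^'q" and Kt K :: "real^'q^'q"
  assumes "0 \<le> \<tau>" and "\<tau> \<le> 1"
    and "pos_def_mat Kt" and "pos_def_mat K"
  shows "D_tau \<tau> mt Kt m K \<ge> 0
         \<and> (D_tau \<tau> mt Kt m K = 0 \<longleftrightarrow> gauss_density mt Kt = gauss_density m K)"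
proof -
  obtain e :: "'q \<Rightarrow> real" where e: "\<forall>i. e i > 0" "Kt = K \<longleftrightarrow> (\<forall>i. e i = 1)"
    and D: "D_tau \<tau> mt Kt m K =
      (if \<tau> = 1 then (if mt = m then ereal (\<Sum>i\<in>UNIV. tau_generator \<tau> (e i)) else \<infinity>)
       else ereal (wnorm2 (matrix_inv K) (mt - m) / (1 - \<tau>) + (\<Sum>i\<in>UNIV. tau_generator \<tau> (e i))))"
    by (rule D_tau_eq_sum_tau_generator[OF assms])
  define T where "T = (\<Sum>i\<in>UNIV. tau_generator \<tau> (e i))"
  have gen: "tau_generator \<tau> (e i) \<ge> 0 \<and> (tau_generator \<tau> (e i) = 0 \<longleftrightarrow> e i = 1)" for i
    using tau_generator_pos[OF assms(1,2), of "e i"] e(1) by (cases "e i = 1") auto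
  have T: "T \<ge> 0" "T = 0 \<longleftrightarrow> Kt = K"
    using gen e(2) by (simp_all add: T_def sum_nonneg sum_nonneg_eq_0_iff)
  define w where "w = wnorm2 (matrix_inv K) (mt - m) / (1 - \<tau>)"
  have w: "\<tau> < 1 \<Longrightarrow> w \<ge> 0 \<and> (w = 0 \<longleftrightarrow> mt = m)"
    using wnorm2_pos[OF pos_def_mat_matrix_inv[OF assms(4)], of "mt - m"]
    by (cases "mt = m") (auto simp: w_def wnorm2_def)
  show ?thesis
    using D T w assms(2) gauss_density_eq_iff[OF assms(3,4)]
    unfolding T_def[symmetric] w_def[symmetric] by (cases "\<tau> = 1") auto
qed

end
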